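(* Let $n \ge 1$, let $f:\mathbb{R}^n \to \mathbb{R}^N$ be a smooth map and let $a \in \mathbb{R}^n$. Suppose $f$ satisfies the local condition at $a$, i.e. every solution $(v_1,v_2,v_3,\lambda) \in \mathbb{R}^n\times\mathbb{R}^n\times\mathbb{R}^n\times\mathbb{R}$ of $$Df_a(v_1) + D^2f_a(v_2,v_3) + \lambda\, D^3f_a(v_3,v_3,v_3) = 0$$ with $v_3 \neq 0$ satisfies $v_1 = 0$, $v_2 = 0$ and $\lambda = 0$. Then there is an open neighborhood $U$ of $a$ such that $f|_U$ is a totally skew embedding, i.e. $f|_U$ is an embedding and $f(U)$ is totally skew at every pair of distinct points of $f(U)$.
   Context: For a smooth $f:\mathbb{R}^n\to\mathbb{R}^N$ and $a\in\mathbb{R}^n$, $D^kf_a$ denotes the symmetric $k$-linear map $(\mathbb{R}^n)^k\to\mathbb{R}^N$ of $k$-th order partial derivatives, defined on the standard basis by $D^kf_a(e_{i_1},\dots,e_{i_k}) = \frac{\partial^k f}{\partial x_{i_1}\cdots\partial x_{i_k}}(a)$; $D^1f_a = Df_a$ is the usual derivative. For a submanifold $M\subseteq\mathbb{R}^N$ and distinct points $p,q\in M$, $M$ is totally skew at $p$ and $q$ if for every (affine) line tangent to $M$ at $p$ and every line tangent to $M$ at $q$, the two lines are neither parallel nor intersecting. *)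

theory Defs
  imports "HOL-Analysis.Analysis"
begin

text \<open>Vectors of R^n are represented as real^'n, points of R^N as real^'m.\<close>

definition pd :: "'n::finite \<Rightarrow> (real^'n \<Rightarrow> real^'m) \<Rightarrow> real^'n \<Rightarrow> real^'m" where
  "pd i f x = frechet_derivative f (at x) (axis i 1)"

fun Ck :: "nat \<Rightarrow> (real^'n::finite \<Rightarrow> real^'m::finite) \<Rightarrow> bool" where
  "Ck 0 f = continuous_on UNIV f"
| "Ck (Suc k) f = ((\<forall>x. f differentiable (at x)) \<and> (\<forall>i. Ck k (pd i f)))"

definition smooth :: "(real^'n::finite \<Rightarrow> real^'m::finite) \<Rightarrow> bool" where
  "smooth f \<longleftrightarrow> (\<forall>k. Ck k f)"

text \<open>D^1 f_a = Df_a, D^2 f_a, D^3 f_a: the multilinear maps with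
  D^k f_a(e_{i1},...,e_{ik}) = partial^k f / partial x_{i1} ... partial x_{ik} (a).\<close>
definition D1 :: "(real^'n::finite \<Rightarrow> real^'m::finite) \<Rightarrow> real^'n \<Rightarrow> real^'n \<Rightarrow> real^'m" where
  "D1 f a v = frechet_derivative f (at a) v"

definition D2 :: "(real^'n::finite \<Rightarrow> real^'m::finite) \<Rightarrow> real^'n \<Rightarrow> real^'n \<Rightarrow> real^'n \<Rightarrow> real^'m" where
  "D2 f a v w = (\<Sum>i\<in>UNIV. \<Sum>j\<in>UNIV. (v$i * w$j) *\<^sub>R pd i (pd j f) a)"

definition D3 :: "(real^'n::finite \<Rightarrow> real^'m::finite) \<Rightarrow> real^'n \<Rightarrow> real^'n \<Rightarrow> real^'n \<Rightarrow> real^'n \<Rightarrow> real^'m" where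
  "D3 f a u v w = (\<Sum>i\<in>UNIV. \<Sum>j\<in>UNIV. \<Sum>k\<in>UNIV.
      (u$i * v$j * w$k) *\<^sub>R pd i (pd j (pd k f)) a)"

definition local_condition :: "(real^'n::finite \<Rightarrow> real^'m::finite) \<Rightarrow> real^'n \<Rightarrow> bool" where
  "local_condition f a \<longleftrightarrow>
     (\<forall>v1 v2 v3 (lam::real). D1 f a v1 + D2 f a v2 v3 + lam *\<^sub>R D3 f a v3 v3 v3 = 0 \<and> v3 \<noteq> 0
        \<longrightarrow> v1 = 0 \<and> v2 = 0 \<and> lam = 0)"

definition aline :: "'a::real_vector \<Rightarrow> 'a \<Rightarrow> 'a set" where
  "aline p u = {p + t *\<^sub>R u | t. True}"

definition embedding_on :: "(real^'n::finite \<Rightarrow> real^'m::finite) \<Rightarrow> (real^'n) set \<Rightarrow> bool" where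
  "embedding_on f U \<longleftrightarrow> open U \<and> (\<forall>x\<in>U. f differentiable (at x)) \<and>
     (\<forall>x\<in>U. inj (frechet_derivative f (at x))) \<and>
     inj_on f U \<and> homeomorphism U (f ` U) f (inv_into U f)"

text \<open>For an embedding, the tangent space of f(U) at f x is the image of Df_x;
  tangent lines at f x are the lines f x + R u with u a nonzero tangent vector.\<close>
definition totally_skew_at :: "(real^'n::finite \<Rightarrow> real^'m::finite) \<Rightarrow> real^'n \<Rightarrow> real^'n \<Rightarrow> bool" where
  "totally_skew_at f x y \<longleftrightarrow>
    (\<forall>u w. u \<in> range (frechet_derivative f (at x)) \<and> u \<noteq> 0 \<and>
           w \<in> range (frechet_derivative f (at y)) \<and> w \<noteq> 0 \<longrightarrow>
       \<not> (\<exists>c. w = c *\<^sub>R u) \<and> aline (f x) u \<inter> aline (f y) w = {})"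

definition totally_skew_embedding :: "(real^'n::finite \<Rightarrow> real^'m::finite) \<Rightarrow> (real^'n) set \<Rightarrow> bool" where
  "totally_skew_embedding f U \<longleftrightarrow> embedding_on f U \<and>
     (\<forall>x\<in>U. \<forall>y\<in>U. f x \<noteq> f y \<longrightarrow> totally_skew_at f x y)"

end

theory Submission
  imports Defs
begin

(*
  Write y - x = eps e with norm e = 1. Taylor expansion of f to third order and of Df to second
  order around x turns a relation  alpha (f y - f x) + Df_x P + Df_y Q = 0  into
    Df_x V1 + D^2f_x (V2, e) + lam D^3f_x (e, e, e) = remainder,
  V1 = alpha (y - x) + P + Q,  V2 = eps (Q + alpha (y - x) / 2),  lam = - alpha eps^3 / 12,
  where the remainder is small compared with |V1| + |V2| + |lam|. By compactness, the local
  condition at a is a lower bound c (|V1| + |V2| + |lam|) for the left-hand side, and it persists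
  at points near a. Hence alpha = 0, P = 0 and Q = 0 for distinct x, y near a: the chord
  f y - f x and the two tangent spaces are linearly independent. This gives injectivity of f
  and of Df_x as well as total skewness, and on a closed ball f is a homeomorphism onto its
  image by compactness.
*)

section \<open>Elementary estimates\<close>

lemma vector_mvt_bound:
  fixes \<phi> :: "real \<Rightarrow> 'a::real_normed_vector"
  assumes "0 \<le> s"
    and deriv: "\<And>t. t \<in> {0..s} \<Longrightarrow> (\<phi> has_vector_derivative \<phi>' t) (at t)"
    and bound: "\<And>t. t \<in> {0..s} \<Longrightarrow> norm (\<phi>' t) \<le> B"
  shows "norm (\<phi> s - \<phi> 0) \<le> B * s"
proof (cases "s = 0")
  case False
  then have "0 < s" using assms(1) by simp
  moreover have "continuous_on {0..s} \<phi>"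
    using deriv by (meson continuous_at_imp_continuous_on has_vector_derivative_continuous)
  ultimately have "norm (\<phi> s - \<phi> 0) \<le> B * s - B * 0"
    using deriv bound
    by (intro differentiable_bound_general[where \<phi>' = "\<lambda>_. B" and f' = \<phi>'])
      (auto intro!: continuous_intros derivative_eq_intros)
  then show ?thesis by simp
qed simp

lemma taylor1_bound:
  fixes g :: "real \<Rightarrow> 'a::real_normed_vector"
  assumes "\<And>t. t \<in> {0..1} \<Longrightarrow> (g has_vector_derivative g' t) (at t)"
    and bound: "\<And>t. t \<in> {0..1} \<Longrightarrow> norm (g' t - g' 0) \<le> B"
    and t: "t \<in> {0..1}"
  shows "norm (g t - g 0 - t *\<^sub>R g' 0) \<le> B"
proof -
  have "0 \<le> B" using bound[of 0] by simp
  have "((\<lambda>s. g s - s *\<^sub>R g' 0) has_vector_derivative g' s - g' 0) (at s)" if "s \<in> {0..1}" for s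
    using assms(1)[OF that] by (auto intro!: derivative_eq_intros)
  then have "norm ((g t - t *\<^sub>R g' 0) - (g 0 - 0 *\<^sub>R g' 0)) \<le> B * t"
    using t bound by (intro vector_mvt_bound[where \<phi>' = "\<lambda>s. g' s - g' 0"]) auto
  also have "\<dots> \<le> B" using t \<open>0 \<le> B\<close> by (simp add: mult_left_le)
  finally show ?thesis by (simp add: algebra_simps)
qed

lemma taylor2_bound:
  fixes g :: "real \<Rightarrow> 'a::real_normed_vector"
  assumes d0: "\<And>t. t \<in> {0..1} \<Longrightarrow> (g has_vector_derivative g' t) (at t)"
    and d1: "\<And>t. t \<in> {0..1} \<Longrightarrow> (g' has_vector_derivative g'' t) (at t)"
    and bound: "\<And>t. t \<in> {0..1} \<Longrightarrow> norm (g'' t - g'' 0) \<le> B"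
    and t: "t \<in> {0..1}"
  shows "norm (g t - g 0 - t *\<^sub>R g' 0 - (t^2/2) *\<^sub>R g'' 0) \<le> B"
proof -
  have "((\<lambda>s. g s - (s^2/2) *\<^sub>R g'' 0) has_vector_derivative g' s - s *\<^sub>R g'' 0) (at s)"
    if "s \<in> {0..1}" for s
    using d0[OF that] by (auto intro!: derivative_eq_intros)
  moreover have "norm ((g' s - s *\<^sub>R g'' 0) - (g' 0 - 0 *\<^sub>R g'' 0)) \<le> B" if "s \<in> {0..1}" for s
    using taylor1_bound[OF d1 bound that] by (simp add: algebra_simps)
  ultimately have "norm ((g t - (t^2/2) *\<^sub>R g'' 0) - (g 0 - (0^2/2) *\<^sub>R g'' 0) - t *\<^sub>R (g' 0 - 0 *\<^sub>R g'' 0)) \<le> B"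
    using t by (rule taylor1_bound)
  then show ?thesis by (simp add: algebra_simps)
qed

lemma taylor3_bound:
  fixes g :: "real \<Rightarrow> 'a::real_normed_vector"
  assumes d0: "\<And>t. t \<in> {0..1} \<Longrightarrow> (g has_vector_derivative g' t) (at t)"
    and d1: "\<And>t. t \<in> {0..1} \<Longrightarrow> (g' has_vector_derivative g'' t) (at t)"
    and d2: "\<And>t. t \<in> {0..1} \<Longrightarrow> (g'' has_vector_derivative g''' t) (at t)"
    and bound: "\<And>t. t \<in> {0..1} \<Longrightarrow> norm (g''' t - g''' 0) \<le> B"
    and t: "t \<in> {0..1}"
  shows "norm (g t - g 0 - t *\<^sub>R g' 0 - (t^2/2) *\<^sub>R g'' 0 - (t^3/6) *\<^sub>R g''' 0) \<le> B"
proof -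
  have "((\<lambda>s. g s - (s^3/6) *\<^sub>R g''' 0) has_vector_derivative g' s - (s^2/2) *\<^sub>R g''' 0) (at s)"
    if "s \<in> {0..1}" for s
    using d0[OF that] by (auto intro!: derivative_eq_intros)
  moreover have "((\<lambda>s. g' s - (s^2/2) *\<^sub>R g''' 0) has_vector_derivative g'' s - s *\<^sub>R g''' 0) (at s)"
    if "s \<in> {0..1}" for s
    using d1[OF that] by (auto intro!: derivative_eq_intros)
  moreover have "norm ((g'' s - s *\<^sub>R g''' 0) - (g'' 0 - 0 *\<^sub>R g''' 0)) \<le> B" if "s \<in> {0..1}" for s
    using taylor1_bound[OF d2 bound that] by (simp add: algebra_simps)
  ultimately have "norm ((g t - (t^3/6) *\<^sub>R g''' 0) - (g 0 - (0^3/6) *\<^sub>R g''' 0)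
      - t *\<^sub>R (g' 0 - (0^2/2) *\<^sub>R g''' 0) - (t^2/2) *\<^sub>R (g'' 0 - 0 *\<^sub>R g''' 0)) \<le> B"
    using t by (rule taylor2_bound)
  then show ?thesis by (simp add: algebra_simps)
qed

lemma eventually_less_if_continuous_zero:
  fixes S :: "'a::metric_space \<Rightarrow> real"
  assumes "continuous_on UNIV S" "S a = 0" "\<eta> > 0"
  shows "\<forall>\<^sub>F z in nhds a. S z < \<eta>"
proof -
  have "isCont S a" using assms(1) by (simp add: continuous_on_eq_continuous_at)
  then have "(S \<longlongrightarrow> S a) (nhds a)" by (simp add: continuous_at tendsto_at_iff_tendsto_nhds)
  then show ?thesis using assms(2,3) by (simp add: order_tendstoD(2))
qed

lemma norm_sum_scaleR_le:
  fixes G :: "'n::finite \<Rightarrow> 'a::real_normed_vector"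
  shows "norm (\<Sum>i\<in>UNIV. u$i *\<^sub>R G i) \<le> norm u * (\<Sum>i\<in>UNIV. norm (G i))"
proof -
  have "norm (\<Sum>i\<in>UNIV. u$i *\<^sub>R G i) \<le> (\<Sum>i\<in>UNIV. norm (u$i *\<^sub>R G i))" by (rule norm_sum)
  also have "\<dots> \<le> (\<Sum>i\<in>UNIV. norm u * norm (G i))"
    by (intro sum_mono) (simp add: mult_right_mono component_le_norm_cart)
  finally show ?thesis by (simp add: sum_distrib_left)
qed

lemma norm_sum2_scaleR_le:
  fixes G :: "'n::finite \<Rightarrow> 'n \<Rightarrow> 'a::real_normed_vector"
  shows "norm (\<Sum>i\<in>UNIV. \<Sum>j\<in>UNIV. (u$i * v$j) *\<^sub>R G i j)
     \<le> norm u * norm v * (\<Sum>i\<in>UNIV. \<Sum>j\<in>UNIV. norm (G i j))"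
proof -
  have "norm (\<Sum>i\<in>UNIV. \<Sum>j\<in>UNIV. (u$i * v$j) *\<^sub>R G i j)
      \<le> (\<Sum>i\<in>UNIV. norm (\<Sum>j\<in>UNIV. (u$i * v$j) *\<^sub>R G i j))"
    by (rule norm_sum)
  also have "\<dots> \<le> (\<Sum>i\<in>UNIV. \<Sum>j\<in>UNIV. norm ((u$i * v$j) *\<^sub>R G i j))"
    by (intro sum_mono norm_sum)
  also have "\<dots> \<le> (\<Sum>i\<in>UNIV. \<Sum>j\<in>UNIV. (norm u * norm v) * norm (G i j))"
    by (intro sum_mono) (simp add: abs_mult mult_right_mono mult_mono component_le_norm_cart)
  finally show ?thesis by (simp add: sum_distrib_left)
qed

lemma norm_sum3_scaleR_le:
  fixes G :: "'n::finite \<Rightarrow> 'n \<Rightarrow> 'n \<Rightarrow> 'a::real_normed_vector"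
  shows "norm (\<Sum>i\<in>UNIV. \<Sum>j\<in>UNIV. \<Sum>k\<in>UNIV. (u$i * v$j * w$k) *\<^sub>R G i j k)
     \<le> norm u * norm v * norm w * (\<Sum>i\<in>UNIV. \<Sum>j\<in>UNIV. \<Sum>k\<in>UNIV. norm (G i j k))"
proof -
  have "norm (\<Sum>i\<in>UNIV. \<Sum>j\<in>UNIV. \<Sum>k\<in>UNIV. (u$i * v$j * w$k) *\<^sub>R G i j k)
      \<le> (\<Sum>i\<in>UNIV. norm (\<Sum>j\<in>UNIV. \<Sum>k\<in>UNIV. (u$i * v$j * w$k) *\<^sub>R G i j k))"
    by (rule norm_sum)
  also have "\<dots> \<le> (\<Sum>i\<in>UNIV. \<Sum>j\<in>UNIV. norm (\<Sum>k\<in>UNIV. (u$i * v$j * w$k) *\<^sub>R G i j k))"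
    by (intro sum_mono norm_sum)
  also have "\<dots> \<le> (\<Sum>i\<in>UNIV. \<Sum>j\<in>UNIV. \<Sum>k\<in>UNIV. norm ((u$i * v$j * w$k) *\<^sub>R G i j k))"
    by (intro sum_mono norm_sum)
  also have "\<dots> \<le> (\<Sum>i\<in>UNIV. \<Sum>j\<in>UNIV. \<Sum>k\<in>UNIV. (norm u * norm v * norm w) * norm (G i j k))"
  proof (intro sum_mono)
    fix i j k
    have "\<bar>u$i\<bar> * \<bar>v$j\<bar> * \<bar>w$k\<bar> \<le> norm u * norm v * norm w"
      by (intro mult_mono component_le_norm_cart) auto
    then show "norm ((u$i * v$j * w$k) *\<^sub>R G i j k) \<le> (norm u * norm v * norm w) * norm (G i j k)"
      by (simp add: abs_mult mult_right_mono)
  qed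
  finally show ?thesis by (simp add: sum_distrib_left)
qed

lemma compact_norm_sum_eq_1:
  "compact {(u :: 'a::{real_normed_vector,heine_borel}, v :: 'b::{real_normed_vector,heine_borel},
      t :: real). norm u + norm v + \<bar>t\<bar> = 1}"
  (is "compact ?T")
  unfolding compact_eq_bounded_closed
proof
  show "bounded ?T"
    unfolding bounded_iff
  proof (intro exI ballI)
    fix p assume "p \<in> ?T"
    then obtain u v t where p: "p = (u, v, t)" and "norm u + norm v + \<bar>t\<bar> = 1" by blast
    moreover have "norm p \<le> norm u + (norm v + norm t)"
      unfolding p by (meson add_left_mono norm_Pair_le order_trans)
    ultimately show "norm p \<le> 1" by simp
  qed
  show "closed ?T"
    unfolding case_prod_beta by (intro closed_Collect_eq continuous_intros)
qed

lemma weighted_sum_le_imp_zero: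
  fixes a b d :: real
  assumes "c * (a + b + d) \<le> A * b + B * d" and "0 < c" "A < c" "B < c"
    and "0 \<le> a" "0 \<le> b" "0 \<le> d"
  shows "a = 0 \<and> b = 0 \<and> d = 0"
proof -
  have "c * a + (c - A) * b + (c - B) * d \<le> 0"
    using assms(1) by (simp add: algebra_simps)
  moreover have "0 \<le> c * a" "0 \<le> (c - A) * b" "0 \<le> (c - B) * d"
    using assms by simp_all
  ultimately have "c * a = 0" "(c - A) * b = 0" "(c - B) * d = 0" by linarith+
  then show ?thesis using assms(2-4) by simp
qed

section \<open>Derivatives of smooth maps\<close>

lemma smooth_pd: "smooth f \<Longrightarrow> smooth (pd i f)"
  unfolding smooth_def by (metis Ck.simps(2))

lemma smooth_differentiable: "smooth f \<Longrightarrow> f differentiable (at x)"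
  unfolding smooth_def by (metis Ck.simps(2))

lemma smooth_continuous_on: "smooth f \<Longrightarrow> continuous_on S f"
  unfolding smooth_def by (metis Ck.simps(1) continuous_on_subset subset_UNIV)

lemma frechet_derivative_eq_sum_pd:
  fixes f :: "real^'n::finite \<Rightarrow> real^'m::finite"
  assumes "f differentiable (at z)"
  shows "frechet_derivative f (at z) v = (\<Sum>i\<in>UNIV. v$i *\<^sub>R pd i f z)"
proof -
  have "frechet_derivative f (at z) v = frechet_derivative f (at z) (\<Sum>i\<in>UNIV. v$i *\<^sub>R axis i 1)"
    using basis_expansion[of v] by (simp add: scalar_mult_eq_scaleR)
  also have "\<dots> = (\<Sum>i\<in>UNIV. v$i *\<^sub>R frechet_derivative f (at z) (axis i 1))"
    using linear_frechet_derivative[OF assms] by (simp add: linear_sum linear_scale)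
  finally show ?thesis by (simp add: pd_def)
qed

lemma D1_eq_sum_pd: "smooth f \<Longrightarrow> D1 f z v = (\<Sum>i\<in>UNIV. v$i *\<^sub>R pd i f z)"
  unfolding D1_def by (intro frechet_derivative_eq_sum_pd smooth_differentiable)

lemma D1_linear_simps:
  assumes "smooth f"
  shows "D1 f z (u + v) = D1 f z u + D1 f z v" "D1 f z (c *\<^sub>R u) = c *\<^sub>R D1 f z u"
    "D1 f z (u - v) = D1 f z u - D1 f z v" "D1 f z (- u) = - D1 f z u" "D1 f z 0 = 0"
  using linear_frechet_derivative[OF smooth_differentiable[OF assms, of z]] unfolding D1_def
  by (simp_all add: linear_add linear_scale linear_diff linear_neg linear_0)

lemma D2_linear_simps:
  "D2 f z (c *\<^sub>R u) v = c *\<^sub>R D2 f z u v"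
  "D2 f z u (c *\<^sub>R v) = c *\<^sub>R D2 f z u v"
  "D2 f z u (v + w) = D2 f z u v + D2 f z u w"
  unfolding D2_def by (simp_all add: scaleR_sum_right algebra_simps sum.distrib)

lemma D3_linear_simps:
  "D3 f z (c *\<^sub>R u) v w = c *\<^sub>R D3 f z u v w"
  "D3 f z u (c *\<^sub>R v) w = c *\<^sub>R D3 f z u v w"
  "D3 f z u v (c *\<^sub>R w) = c *\<^sub>R D3 f z u v w"
  "D3 f z u v (w + w') = D3 f z u v w + D3 f z u v w'"
  unfolding D3_def by (simp_all add: scaleR_sum_right algebra_simps sum.distrib)

lemma has_vector_derivative_along_line:
  fixes f :: "real^'n::finite \<Rightarrow> real^'m::finite"
  assumes "f differentiable (at (x + t *\<^sub>R h))"
  shows "((\<lambda>t. f (x + t *\<^sub>R h)) has_vector_derivative (\<Sum>i\<in>UNIV. h$i *\<^sub>R pd i f (x + t *\<^sub>R h))) (at t)"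
proof -
  have "((\<lambda>t. x + t *\<^sub>R h) has_derivative (\<lambda>s. s *\<^sub>R h)) (at t)"
    by (auto intro!: derivative_eq_intros)
  from has_derivative_compose[OF this frechet_derivative_works[THEN iffD1, OF assms]]
  show ?thesis
    using linear_frechet_derivative[OF assms]
    by (simp add: has_vector_derivative_def linear_scale frechet_derivative_eq_sum_pd[OF assms]
        scaleR_sum_right mult.commute)
qed

lemma has_vector_derivative_along_axis:
  fixes f :: "real^'n::finite \<Rightarrow> real^'m::finite"
  assumes "smooth f"
  shows "((\<lambda>t. f (x + t *\<^sub>R axis i 1)) has_vector_derivative pd i f (x + t *\<^sub>R axis i 1)) (at t)"
proof -
  have eq: "(\<Sum>k\<in>UNIV. axis i 1 $ k *\<^sub>R pd k f (x + t *\<^sub>R axis i 1)) = pd i f (x + t *\<^sub>R axis i 1)"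
    by (subst sum.cong[OF refl, where h = "\<lambda>k. if k = i then pd k f (x + t *\<^sub>R axis i 1) else 0"])
      (auto simp: axis_def)
  show ?thesis
    using has_vector_derivative_along_line[OF smooth_differentiable[OF assms], where x = x and t = t and h = "axis i 1"]
    unfolding eq .
qed

lemma has_vector_derivative_f_line:
  "smooth f \<Longrightarrow> ((\<lambda>t. f (x + t *\<^sub>R h)) has_vector_derivative D1 f (x + t *\<^sub>R h) h) (at t)"
  using has_vector_derivative_along_line[OF smooth_differentiable] by (simp add: D1_eq_sum_pd)

lemma has_vector_derivative_D1_line:
  assumes "smooth f"
  shows "((\<lambda>t. D1 f (x + t *\<^sub>R h) v) has_vector_derivative D2 f (x + t *\<^sub>R h) h v) (at t)"
proof -
  have "((\<lambda>t. \<Sum>k\<in>UNIV. v$k *\<^sub>R pd k f (x + t *\<^sub>R h)) has_vector_derivative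
      (\<Sum>k\<in>UNIV. v$k *\<^sub>R (\<Sum>j\<in>UNIV. h$j *\<^sub>R pd j (pd k f) (x + t *\<^sub>R h)))) (at t)"
    by (intro has_vector_derivative_sum bounded_linear.has_vector_derivative[OF bounded_linear_scaleR_right]
        has_vector_derivative_along_line smooth_differentiable smooth_pd assms)
  moreover have "(\<Sum>k\<in>UNIV. v$k *\<^sub>R (\<Sum>j\<in>UNIV. h$j *\<^sub>R pd j (pd k f) (x + t *\<^sub>R h)))
      = D2 f (x + t *\<^sub>R h) h v"
    unfolding D2_def scaleR_sum_right scaleR_scaleR by (subst sum.swap) (simp add: mult.commute)
  ultimately show ?thesis by (simp add: D1_eq_sum_pd[OF assms])
qed

lemma has_vector_derivative_D2_line:
  assumes "smooth f"
  shows "((\<lambda>t. D2 f (x + t *\<^sub>R h) u v) has_vector_derivative D3 f (x + t *\<^sub>R h) h u v) (at t)"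
proof -
  let ?z = "x + t *\<^sub>R h"
  have "((\<lambda>t. \<Sum>i\<in>UNIV. \<Sum>j\<in>UNIV. (u$i * v$j) *\<^sub>R pd i (pd j f) (x + t *\<^sub>R h)) has_vector_derivative
      (\<Sum>i\<in>UNIV. \<Sum>j\<in>UNIV. (u$i * v$j) *\<^sub>R (\<Sum>k\<in>UNIV. h$k *\<^sub>R pd k (pd i (pd j f)) ?z))) (at t)"
    by (intro has_vector_derivative_sum bounded_linear.has_vector_derivative[OF bounded_linear_scaleR_right]
        has_vector_derivative_along_line smooth_differentiable smooth_pd assms)
  moreover have "(\<Sum>i\<in>UNIV. \<Sum>j\<in>UNIV. (u$i * v$j) *\<^sub>R (\<Sum>k\<in>UNIV. h$k *\<^sub>R pd k (pd i (pd j f)) ?z))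
     = (\<Sum>i\<in>UNIV. \<Sum>j\<in>UNIV. \<Sum>k\<in>UNIV. (h$k * u$i * v$j) *\<^sub>R pd k (pd i (pd j f)) ?z)"
    by (simp add: scaleR_sum_right mult_ac)
  also have "\<dots> = (\<Sum>i\<in>UNIV. \<Sum>k\<in>UNIV. \<Sum>j\<in>UNIV. (h$k * u$i * v$j) *\<^sub>R pd k (pd i (pd j f)) ?z)"
    by (intro sum.cong refl sum.swap)
  also have "\<dots> = D3 f ?z h u v"
    unfolding D3_def by (rule sum.swap)
  ultimately show ?thesis unfolding D2_def by simp
qed

lemma f_taylor3_along_line:
  assumes "smooth f"
    and osc: "\<And>t u v w. t \<in> {0..1} \<Longrightarrow>
      norm (D3 f (x + t *\<^sub>R h) u v w - D3 f x u v w) \<le> norm u * norm v * norm w * \<delta>"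
  shows "norm (f (x + h) - f x - D1 f x h - (1/2) *\<^sub>R D2 f x h h - (1/6) *\<^sub>R D3 f x h h h)
    \<le> norm h * norm h * norm h * \<delta>"
proof -
  have "norm (f (x + 1 *\<^sub>R h) - f (x + 0 *\<^sub>R h) - 1 *\<^sub>R D1 f (x + 0 *\<^sub>R h) h
      - (1^2/2) *\<^sub>R D2 f (x + 0 *\<^sub>R h) h h - (1^3/6) *\<^sub>R D3 f (x + 0 *\<^sub>R h) h h h)
    \<le> norm h * norm h * norm h * \<delta>"
    by (rule taylor3_bound[where g = "\<lambda>t. f (x + t *\<^sub>R h)"])
      (use osc in \<open>auto intro: has_vector_derivative_f_line has_vector_derivative_D1_line
        has_vector_derivative_D2_line assms(1)\<close>)
  then show ?thesis by simp
qed

lemma D1_taylor2_along_line: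
  assumes "smooth f"
    and osc: "\<And>t u v w. t \<in> {0..1} \<Longrightarrow>
      norm (D3 f (x + t *\<^sub>R h) u v w - D3 f x u v w) \<le> norm u * norm v * norm w * \<delta>"
  shows "norm (D1 f (x + h) v - D1 f x v - D2 f x h v - (1/2) *\<^sub>R D3 f x h h v)
    \<le> norm h * norm h * norm v * \<delta>"
proof -
  have "norm (D1 f (x + 1 *\<^sub>R h) v - D1 f (x + 0 *\<^sub>R h) v - 1 *\<^sub>R D2 f (x + 0 *\<^sub>R h) h v
      - (1^2/2) *\<^sub>R D3 f (x + 0 *\<^sub>R h) h h v)
    \<le> norm h * norm h * norm v * \<delta>"
    by (rule taylor2_bound[where g = "\<lambda>t. D1 f (x + t *\<^sub>R h) v"])
      (use osc in \<open>auto intro: has_vector_derivative_D1_line has_vector_derivative_D2_line assms(1)\<close>)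
  then show ?thesis by simp
qed

lemma second_difference_approx:
  fixes g :: "real^'n::finite \<Rightarrow> real^'m::finite"
  assumes "smooth g" and "0 < s"
    and near: "\<And>z. norm (z - a) \<le> 2 * s \<Longrightarrow> norm (pd j (pd i g) z - pd j (pd i g) a) \<le> \<eta>"
  defines "ei \<equiv> axis i 1" and "ej \<equiv> axis j 1"
  shows "norm (g (a + s *\<^sub>R ej + s *\<^sub>R ei) - g (a + s *\<^sub>R ei) - g (a + s *\<^sub>R ej) + g a
           - (s * s) *\<^sub>R pd j (pd i g) a) \<le> \<eta> * (s * s)"
proof -
  define c where "c = pd j (pd i g) a"
  have inner: "norm (pd i g (a + u *\<^sub>R ei + s *\<^sub>R ej) - pd i g (a + u *\<^sub>R ei) - s *\<^sub>R c) \<le> \<eta> * s"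
    if u: "u \<in> {0..s}" for u
  proof -
    have "((\<lambda>v. pd i g (a + u *\<^sub>R ei + v *\<^sub>R ej)) has_vector_derivative
        pd j (pd i g) (a + u *\<^sub>R ei + v *\<^sub>R ej)) (at v)" for v
      unfolding ej_def by (rule has_vector_derivative_along_axis[OF smooth_pd[OF assms(1)]])
    then have "((\<lambda>v. pd i g (a + u *\<^sub>R ei + v *\<^sub>R ej) - v *\<^sub>R c) has_vector_derivative
        pd j (pd i g) (a + u *\<^sub>R ei + v *\<^sub>R ej) - c) (at v)" for v
      by (auto intro!: derivative_eq_intros)
    moreover have "norm (pd j (pd i g) (a + u *\<^sub>R ei + v *\<^sub>R ej) - c) \<le> \<eta>" if v: "v \<in> {0..s}" for v
    proof -
      have "norm (u *\<^sub>R ei + v *\<^sub>R ej) \<le> u + v"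
        using norm_triangle_ineq[of "u *\<^sub>R ei" "v *\<^sub>R ej"] u v by (simp add: ei_def ej_def)
      then show ?thesis unfolding c_def using u v by (intro near) (simp add: add.assoc)
    qed
    ultimately have "norm ((pd i g (a + u *\<^sub>R ei + s *\<^sub>R ej) - s *\<^sub>R c) - (pd i g (a + u *\<^sub>R ei + 0 *\<^sub>R ej) - 0 *\<^sub>R c))
        \<le> \<eta> * s"
      using assms(2) by (intro vector_mvt_bound) auto
    then show ?thesis by (simp add: algebra_simps)
  qed
  have "((\<lambda>u. g (a + s *\<^sub>R ej + u *\<^sub>R ei)) has_vector_derivative pd i g (a + s *\<^sub>R ej + u *\<^sub>R ei)) (at u)"
    and "((\<lambda>u. g (a + u *\<^sub>R ei)) has_vector_derivative pd i g (a + u *\<^sub>R ei)) (at u)" for u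
    unfolding ei_def by (rule has_vector_derivative_along_axis[OF assms(1)])+
  then have "((\<lambda>u. g (a + s *\<^sub>R ej + u *\<^sub>R ei) - g (a + u *\<^sub>R ei) - u *\<^sub>R (s *\<^sub>R c)) has_vector_derivative
      pd i g (a + s *\<^sub>R ej + u *\<^sub>R ei) - pd i g (a + u *\<^sub>R ei) - s *\<^sub>R c) (at u)" for u
    by (auto intro!: derivative_eq_intros)
  then have "norm ((g (a + s *\<^sub>R ej + s *\<^sub>R ei) - g (a + s *\<^sub>R ei) - s *\<^sub>R (s *\<^sub>R c))
      - (g (a + s *\<^sub>R ej + 0 *\<^sub>R ei) - g (a + 0 *\<^sub>R ei) - 0 *\<^sub>R (s *\<^sub>R c))) \<le> (\<eta> * s) * s"
    using assms(2) inner by (intro vector_mvt_bound) (auto simp: add_ac)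
  then show ?thesis unfolding c_def by (simp add: algebra_simps)
qed

lemma mixed_pd_dist_le:
  fixes g :: "real^'n::finite \<Rightarrow> real^'m::finite"
  assumes "smooth g" and "0 < \<eta>"
  shows "norm (pd j (pd i g) a - pd i (pd j g) a) \<le> 2 * \<eta>"
proof -
  define c1 where "c1 = pd j (pd i g) a"
  define c2 where "c2 = pd i (pd j g) a"
  have "\<forall>\<^sub>F z in nhds a. norm (pd j (pd i g) z - c1) < \<eta> \<and> norm (pd i (pd j g) z - c2) < \<eta>"
    unfolding c1_def c2_def using assms
    by (intro eventually_conj eventually_less_if_continuous_zero continuous_intros
        smooth_continuous_on smooth_pd) auto
  then obtain d where "d > 0" and d: "\<And>z. dist z a \<le> d \<Longrightarrow>
      norm (pd j (pd i g) z - c1) < \<eta> \<and> norm (pd i (pd j g) z - c2) < \<eta>"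
    unfolding eventually_nhds_metric_le by blast
  define s where "s = d / 2"
  have "0 < s" using \<open>d > 0\<close> by (simp add: s_def)
  have near: "norm (pd j (pd i g) z - c1) \<le> \<eta>" "norm (pd i (pd j g) z - c2) \<le> \<eta>"
    if "norm (z - a) \<le> 2 * s" for z
    using d[of z] that by (auto simp: s_def dist_norm)
  define \<Delta> where "\<Delta> = g (a + s *\<^sub>R axis j 1 + s *\<^sub>R axis i 1) - g (a + s *\<^sub>R axis i 1)
    - g (a + s *\<^sub>R axis j 1) + g a"
  have approx1: "norm (\<Delta> - (s * s) *\<^sub>R c1) \<le> \<eta> * (s * s)"
    unfolding \<Delta>_def c1_def
    by (rule second_difference_approx[OF assms(1) \<open>0 < s\<close>]) (use near(1) in \<open>simp add: c1_def\<close>)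
  have "norm (g (a + s *\<^sub>R axis i 1 + s *\<^sub>R axis j 1) - g (a + s *\<^sub>R axis j 1)
      - g (a + s *\<^sub>R axis i 1) + g a - (s * s) *\<^sub>R c2) \<le> \<eta> * (s * s)"
    unfolding c2_def
    by (rule second_difference_approx[OF assms(1) \<open>0 < s\<close>]) (use near(2) in \<open>simp add: c2_def\<close>)
  moreover have "g (a + s *\<^sub>R axis i 1 + s *\<^sub>R axis j 1) - g (a + s *\<^sub>R axis j 1)
      - g (a + s *\<^sub>R axis i 1) + g a = \<Delta>"
    unfolding \<Delta>_def by (simp add: add_ac)
  ultimately have approx2: "norm (\<Delta> - (s * s) *\<^sub>R c2) \<le> \<eta> * (s * s)" by simp
  have "(s * s) * norm (c1 - c2) = norm ((\<Delta> - (s * s) *\<^sub>R c2) - (\<Delta> - (s * s) *\<^sub>R c1))"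
    using \<open>0 < s\<close> by (simp add: abs_mult flip: scaleR_diff_right)
  also have "\<dots> \<le> \<eta> * (s * s) + \<eta> * (s * s)"
    by (rule order_trans[OF norm_triangle_ineq4 add_mono[OF approx2 approx1]])
  also have "\<dots> = (s * s) * (2 * \<eta>)"
    by (simp add: algebra_simps)
  finally show ?thesis using \<open>0 < s\<close> unfolding c1_def c2_def by simp
qed

lemma pd_commute:
  fixes g :: "real^'n::finite \<Rightarrow> real^'m::finite"
  assumes "smooth g"
  shows "pd j (pd i g) a = pd i (pd j g) a"
proof -
  have "norm (pd j (pd i g) a - pd i (pd j g) a) \<le> 0 + e" if "0 < e" for e
    using mixed_pd_dist_le[OF assms, of "e / 2"] that by simp
  then have "norm (pd j (pd i g) a - pd i (pd j g) a) \<le> 0"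
    by (rule field_le_epsilon)
  then show ?thesis by simp
qed

lemma D2_commute: "smooth f \<Longrightarrow> D2 f a u v = D2 f a v u"
  unfolding D2_def by (subst sum.swap) (simp add: pd_commute mult.commute)

lemma D1_diff_le:
  assumes "smooth f"
  shows "norm (D1 f z v - D1 f a v) \<le> norm v * (\<Sum>i\<in>UNIV. norm (pd i f z - pd i f a))"
proof -
  have "D1 f z v - D1 f a v = (\<Sum>i\<in>UNIV. v$i *\<^sub>R (pd i f z - pd i f a))"
    unfolding D1_eq_sum_pd[OF assms] by (simp add: sum_subtractf scaleR_diff_right)
  then show ?thesis using norm_sum_scaleR_le[of v "\<lambda>i. pd i f z - pd i f a"] by simp
qed

lemma D2_diff_le:
  "norm (D2 f z u v - D2 f a u v)
     \<le> norm u * norm v * (\<Sum>i\<in>UNIV. \<Sum>j\<in>UNIV. norm (pd i (pd j f) z - pd i (pd j f) a))"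
proof -
  have "D2 f z u v - D2 f a u v
      = (\<Sum>i\<in>UNIV. \<Sum>j\<in>UNIV. (u$i * v$j) *\<^sub>R (pd i (pd j f) z - pd i (pd j f) a))"
    unfolding D2_def by (simp add: sum_subtractf scaleR_diff_right)
  then show ?thesis using norm_sum2_scaleR_le[of u v "\<lambda>i j. pd i (pd j f) z - pd i (pd j f) a"] by simp
qed

lemma D3_diff_le:
  "norm (D3 f z u v w - D3 f a u v w) \<le> norm u * norm v * norm w *
     (\<Sum>i\<in>UNIV. \<Sum>j\<in>UNIV. \<Sum>k\<in>UNIV. norm (pd i (pd j (pd k f)) z - pd i (pd j (pd k f)) a))"
proof -
  have "D3 f z u v w - D3 f a u v w = (\<Sum>i\<in>UNIV. \<Sum>j\<in>UNIV. \<Sum>k\<in>UNIV.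
      (u$i * v$j * w$k) *\<^sub>R (pd i (pd j (pd k f)) z - pd i (pd j (pd k f)) a))"
    unfolding D3_def by (simp add: sum_subtractf scaleR_diff_right)
  then show ?thesis
    using norm_sum3_scaleR_le[of u v w "\<lambda>i j k. pd i (pd j (pd k f)) z - pd i (pd j (pd k f)) a"] by simp
qed

lemma D3_bounded: "\<exists>K\<ge>0. \<forall>u v w. norm (D3 f a u v w) \<le> norm u * norm v * norm w * K"
proof (intro exI conjI allI)
  show "0 \<le> (\<Sum>i\<in>UNIV. \<Sum>j\<in>UNIV. \<Sum>k\<in>UNIV. norm (pd i (pd j (pd k f)) a))"
    by (intro sum_nonneg norm_ge_zero)
  show "norm (D3 f a u v w) \<le> norm u * norm v * norm w *
      (\<Sum>i\<in>UNIV. \<Sum>j\<in>UNIV. \<Sum>k\<in>UNIV. norm (pd i (pd j (pd k f)) a))" for u v w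
    unfolding D3_def by (rule norm_sum3_scaleR_le)
qed

lemma eventually_D1_close:
  assumes "smooth f" "\<eta> > 0"
  shows "\<forall>\<^sub>F z in nhds a. \<forall>v. norm (D1 f z v - D1 f a v) \<le> norm v * \<eta>"
proof -
  have "\<forall>\<^sub>F z in nhds a. (\<Sum>i\<in>UNIV. norm (pd i f z - pd i f a)) < \<eta>"
    using assms by (intro eventually_less_if_continuous_zero continuous_intros smooth_continuous_on smooth_pd) auto
  then show ?thesis
    by eventually_elim (intro allI order_trans[OF D1_diff_le[OF assms(1)]] mult_left_mono, auto)
qed

lemma eventually_D2_close:
  assumes "smooth f" "\<eta> > 0"
  shows "\<forall>\<^sub>F z in nhds a. \<forall>u v. norm (D2 f z u v - D2 f a u v) \<le> norm u * norm v * \<eta>"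
proof -
  have "\<forall>\<^sub>F z in nhds a. (\<Sum>i\<in>UNIV. \<Sum>j\<in>UNIV. norm (pd i (pd j f) z - pd i (pd j f) a)) < \<eta>"
    using assms by (intro eventually_less_if_continuous_zero continuous_intros smooth_continuous_on smooth_pd) auto
  then show ?thesis
    by eventually_elim (intro allI order_trans[OF D2_diff_le] mult_left_mono, auto)
qed

lemma eventually_D3_close:
  assumes "smooth f" "\<eta> > 0"
  shows "\<forall>\<^sub>F z in nhds a. \<forall>u v w. norm (D3 f z u v w - D3 f a u v w) \<le> norm u * norm v * norm w * \<eta>"
proof -
  have "\<forall>\<^sub>F z in nhds a.
      (\<Sum>i\<in>UNIV. \<Sum>j\<in>UNIV. \<Sum>k\<in>UNIV. norm (pd i (pd j (pd k f)) z - pd i (pd j (pd k f)) a)) < \<eta>"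
    using assms by (intro eventually_less_if_continuous_zero continuous_intros smooth_continuous_on smooth_pd) auto
  then show ?thesis
    by eventually_elim (intro allI order_trans[OF D3_diff_le] mult_left_mono, auto)
qed

lemma derivatives_close_near:
  fixes f :: "real^'n::finite \<Rightarrow> real^'m::finite"
  assumes "smooth f" and "0 < \<eta>"
  obtains d where "0 < d"
    and "\<And>z v. dist z a \<le> d \<Longrightarrow> norm (D1 f z v - D1 f a v) \<le> norm v * \<eta>"
    and "\<And>z u v. dist z a \<le> d \<Longrightarrow> norm (D2 f z u v - D2 f a u v) \<le> norm u * norm v * \<eta>"
    and "\<And>z u v w. dist z a \<le> d \<Longrightarrow>
      norm (D3 f z u v w - D3 f a u v w) \<le> norm u * norm v * norm w * \<eta>"
proof -
  have "\<forall>\<^sub>F z in nhds a. (\<forall>v. norm (D1 f z v - D1 f a v) \<le> norm v * \<eta>)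
      \<and> (\<forall>u v. norm (D2 f z u v - D2 f a u v) \<le> norm u * norm v * \<eta>)
      \<and> (\<forall>u v w. norm (D3 f z u v w - D3 f a u v w) \<le> norm u * norm v * norm w * \<eta>)"
    using assms by (intro eventually_conj eventually_D1_close eventually_D2_close eventually_D3_close)
  then show thesis
    unfolding eventually_nhds_metric_le by (elim exE conjE) (rule that; blast)
qed

section \<open>The local condition\<close>

lemma local_condition_lower_bound:
  fixes f :: "real^'n::finite \<Rightarrow> real^'m::finite"
  assumes sm: "smooth f" and lc: "local_condition f a"
  obtains c where "c > 0" and "\<And>e V1 V2 lam. norm e = 1 \<Longrightarrow>
    c * (norm V1 + norm V2 + \<bar>lam\<bar>) \<le> norm (D1 f a V1 + D2 f a V2 e + lam *\<^sub>R D3 f a e e e)"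
proof -
  define L :: "(real^'n) \<times> (real^'n) \<times> (real^'n) \<times> real \<Rightarrow> real^'m" where
    "L = (\<lambda>(e, V1, V2, lam). D1 f a V1 + D2 f a V2 e + lam *\<^sub>R D3 f a e e e)"
  define S :: "((real^'n) \<times> (real^'n) \<times> (real^'n) \<times> real) set" where
    "S = sphere 0 1 \<times> {(V1, V2, lam). norm V1 + norm V2 + \<bar>lam\<bar> = 1}"
  have "compact S" unfolding S_def by (intro compact_Times compact_sphere compact_norm_sum_eq_1)
  moreover have "(axis undefined 1, axis undefined 1, 0, 0) \<in> S" by (simp add: S_def)
  moreover have "continuous_on S L"
    unfolding L_def case_prod_beta D1_eq_sum_pd[OF sm] D2_def D3_def by (intro continuous_intros)
  ultimately obtain p0 where "p0 \<in> S" and min: "\<And>p. p \<in> S \<Longrightarrow> norm (L p0) \<le> norm (L p)"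
    using continuous_attains_inf[of S "\<lambda>p. norm (L p)"] by (metis continuous_on_norm empty_iff)
  have "norm (L p0) > 0"
    using lc \<open>p0 \<in> S\<close> unfolding local_condition_def S_def L_def by (cases p0) force
  moreover have "norm (L p0) * (norm V1 + norm V2 + \<bar>lam\<bar>) \<le> norm (L (e, V1, V2, lam))"
    if "norm e = 1" for e V1 V2 lam
  proof (cases "norm V1 + norm V2 + \<bar>lam\<bar> = 0")
    case False
    define t where "t = norm V1 + norm V2 + \<bar>lam\<bar>"
    have "t > 0" using False unfolding t_def by (simp add: add_nonneg_pos order_le_neq_trans)
    have "L (e, V1, V2, lam) = t *\<^sub>R L (e, (1/t) *\<^sub>R V1, (1/t) *\<^sub>R V2, lam / t)"
      using \<open>t > 0\<close> unfolding L_def by (simp add: D1_linear_simps[OF sm] D2_linear_simps algebra_simps)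
    moreover have "(e, (1/t) *\<^sub>R V1, (1/t) *\<^sub>R V2, lam / t) \<in> S"
      using that \<open>t > 0\<close> unfolding S_def t_def by (simp add: add_divide_distrib[symmetric])
    ultimately show ?thesis
      using min \<open>t > 0\<close> unfolding t_def[symmetric] by (simp add: mult.commute mult_left_mono)
  qed simp
  ultimately show thesis by (intro that[of "norm (L p0)"]) (simp_all add: L_def)
qed

lemma lower_bound_perturb:
  fixes f :: "real^'n::finite \<Rightarrow> real^'m::finite"
  assumes lower: "c * (norm V1 + norm V2 + \<bar>lam\<bar>) \<le> norm (D1 f a V1 + D2 f a V2 e + lam *\<^sub>R D3 f a e e e)"
    and "norm e = 1"
    and D1: "norm (D1 f z V1 - D1 f a V1) \<le> norm V1 * \<eta>"
    and D2: "norm (D2 f z V2 e - D2 f a V2 e) \<le> norm V2 * norm e * \<eta>"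
    and D3: "norm (D3 f z e e e - D3 f a e e e) \<le> norm e * norm e * norm e * \<eta>"
  shows "(c - \<eta>) * (norm V1 + norm V2 + \<bar>lam\<bar>) \<le> norm (D1 f z V1 + D2 f z V2 e + lam *\<^sub>R D3 f z e e e)"
proof -
  define La where "La = D1 f a V1 + D2 f a V2 e + lam *\<^sub>R D3 f a e e e"
  define Lz where "Lz = D1 f z V1 + D2 f z V2 e + lam *\<^sub>R D3 f z e e e"
  have "Lz - La = (D1 f z V1 - D1 f a V1) + (D2 f z V2 e - D2 f a V2 e) + lam *\<^sub>R (D3 f z e e e - D3 f a e e e)"
    by (simp add: La_def Lz_def algebra_simps)
  moreover have "norm (lam *\<^sub>R (D3 f z e e e - D3 f a e e e)) \<le> \<bar>lam\<bar> * \<eta>"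
    using D3 \<open>norm e = 1\<close> by (simp add: mult_left_mono)
  ultimately have "norm (Lz - La) \<le> norm V1 * \<eta> + norm V2 * \<eta> + \<bar>lam\<bar> * \<eta>"
    using D1 D2 \<open>norm e = 1\<close> by (simp only:) (intro norm_triangle_le add_mono, simp_all)
  moreover have "norm La \<le> norm Lz + norm (Lz - La)"
    using norm_triangle_ineq2[of La Lz] by (simp add: norm_minus_commute)
  ultimately show ?thesis
    using lower unfolding La_def[symmetric] Lz_def[symmetric] by (simp add: algebra_simps)
qed

definition skew_independent :: "(real^'n::finite \<Rightarrow> real^'m::finite) \<Rightarrow> real^'n \<Rightarrow> real^'n \<Rightarrow> bool" where
  "skew_independent f x y \<longleftrightarrow>
     (\<forall>\<alpha> P Q. \<alpha> *\<^sub>R (f y - f x) + D1 f x P + D1 f y Q = 0 \<longrightarrow> \<alpha> = 0 \<and> P = 0 \<and> Q = 0)"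

(* The cubic terms alpha/6 D^3f_x(h,h,h) of f and -alpha/4 D^3f_x(h,h,h), split off from
   D^3f_x(h,h,Q) by the choice of V2, add up to the coefficient -alpha/12 of lam. *)
lemma skew_combination_expansion:
  fixes f :: "real^'n::finite \<Rightarrow> real^'m::finite" and e :: "real^'n"
  assumes "smooth f" and "\<epsilon> \<noteq> 0"
  defines "h \<equiv> \<epsilon> *\<^sub>R e"
  shows "\<alpha> *\<^sub>R (f (x + h) - f x) + D1 f x P + D1 f (x + h) Q =
     D1 f x (\<alpha> *\<^sub>R h + P + Q) + D2 f x e (\<epsilon> *\<^sub>R (Q + (\<alpha>/2) *\<^sub>R h))
     - (\<alpha> * \<epsilon>^3 / 12) *\<^sub>R D3 f x e e e + (\<epsilon>/2) *\<^sub>R D3 f x e e (\<epsilon> *\<^sub>R (Q + (\<alpha>/2) *\<^sub>R h))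
     + \<alpha> *\<^sub>R (f (x + h) - f x - D1 f x h - (1/2) *\<^sub>R D2 f x h h - (1/6) *\<^sub>R D3 f x h h h)
     + (D1 f (x + h) Q - D1 f x Q - D2 f x h Q - (1/2) *\<^sub>R D3 f x h h Q)"
proof -
  \<comment> \<open>Tested against an arbitrary \<open>w\<close>, the identity becomes scalar and \<open>field_simps\<close> normalises it.\<close>
  have "(\<alpha> *\<^sub>R (f (x + h) - f x) + D1 f x P + D1 f (x + h) Q) \<bullet> w =
     (D1 f x (\<alpha> *\<^sub>R h + P + Q) + D2 f x e (\<epsilon> *\<^sub>R (Q + (\<alpha>/2) *\<^sub>R h))
     - (\<alpha> * \<epsilon>^3 / 12) *\<^sub>R D3 f x e e e + (\<epsilon>/2) *\<^sub>R D3 f x e e (\<epsilon> *\<^sub>R (Q + (\<alpha>/2) *\<^sub>R h))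
     + \<alpha> *\<^sub>R (f (x + h) - f x - D1 f x h - (1/2) *\<^sub>R D2 f x h h - (1/6) *\<^sub>R D3 f x h h h)
     + (D1 f (x + h) Q - D1 f x Q - D2 f x h Q - (1/2) *\<^sub>R D3 f x h h Q)) \<bullet> w" for w
    unfolding h_def using assms(2)
    by (simp add: D1_linear_simps[OF assms(1)] D2_linear_simps D3_linear_simps inner_simps field_simps power3_eq_cube)
  then show ?thesis by (subst vector_eq_rdot[symmetric]) blast
qed

lemma skew_remainder_weights_le:
  fixes Q e :: "'a::real_normed_vector" and \<alpha> \<epsilon> \<delta> :: real
  assumes "norm e = 1" and "0 < \<epsilon>" "\<epsilon> \<le> 1" "0 \<le> \<delta>"
  defines "V2 \<equiv> \<epsilon> *\<^sub>R (Q + (\<alpha>/2) *\<^sub>R (\<epsilon> *\<^sub>R e))" and "lam \<equiv> - (\<alpha> * \<epsilon>^3 / 12)"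
  shows "\<bar>\<alpha>\<bar> * (\<epsilon> * \<epsilon> * \<epsilon> * \<delta>) + \<epsilon> * \<epsilon> * norm Q * \<delta> \<le> \<delta> * norm V2 + 18 * \<delta> * \<bar>lam\<bar>"
proof -
  have "\<epsilon> *\<^sub>R Q = V2 - (\<alpha> * \<epsilon> * \<epsilon> / 2) *\<^sub>R e"
    unfolding V2_def by (simp add: algebra_simps)
  then have "\<epsilon> * norm Q = norm (V2 - (\<alpha> * \<epsilon> * \<epsilon> / 2) *\<^sub>R e)"
    using \<open>0 < \<epsilon>\<close> by (metis abs_of_pos norm_scaleR)
  also have "\<dots> \<le> norm V2 + \<bar>\<alpha>\<bar> * \<epsilon> * \<epsilon> / 2"
    using norm_triangle_ineq4[of V2 "(\<alpha> * \<epsilon> * \<epsilon> / 2) *\<^sub>R e"] assms(1) \<open>0 < \<epsilon>\<close>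
    by (simp add: abs_mult)
  finally have "\<epsilon> * (\<epsilon> * norm Q) \<le> \<epsilon> * (norm V2 + \<bar>\<alpha>\<bar> * \<epsilon> * \<epsilon> / 2)"
    using \<open>0 < \<epsilon>\<close> by (intro mult_left_mono) auto
  moreover have "\<epsilon> * norm V2 \<le> norm V2"
    using assms(2,3) by (simp add: mult_left_le_one_le)
  moreover have lam: "\<bar>\<alpha>\<bar> * (\<epsilon> * \<epsilon> * \<epsilon>) = 12 * \<bar>lam\<bar>"
    using \<open>0 < \<epsilon>\<close> by (simp add: lam_def abs_mult power3_eq_cube)
  ultimately have "\<epsilon> * \<epsilon> * norm Q * \<delta> \<le> (norm V2 + 6 * \<bar>lam\<bar>) * \<delta>"
    using \<open>0 \<le> \<delta>\<close> by (intro mult_right_mono) (simp_all add: algebra_simps)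
  then show ?thesis
    using lam by (simp add: algebra_simps)
qed

lemma skew_independent_if_lower_bound:
  fixes f :: "real^'n::finite \<Rightarrow> real^'m::finite"
  assumes sm: "smooth f" and "x \<noteq> y" and "norm (y - x) \<le> 1"
    and lower: "\<And>e V1 V2 lam. norm e = 1 \<Longrightarrow>
      c * (norm V1 + norm V2 + \<bar>lam\<bar>) \<le> norm (D1 f x V1 + D2 f x V2 e + lam *\<^sub>R D3 f x e e e)"
    and osc: "\<And>t u v w. t \<in> {0..1} \<Longrightarrow>
      norm (D3 f (x + t *\<^sub>R (y - x)) u v w - D3 f x u v w) \<le> norm u * norm v * norm w * \<delta>"
    and bound: "\<And>u v w. norm (D3 f x u v w) \<le> norm u * norm v * norm w * K"
    and small: "norm (y - x) * K / 2 + \<delta> < c" "18 * \<delta> < c"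
  shows "skew_independent f x y"
  unfolding skew_independent_def
proof (intro allI impI)
  fix \<alpha> P Q
  assume eq: "\<alpha> *\<^sub>R (f y - f x) + D1 f x P + D1 f y Q = 0"
  define \<epsilon> where "\<epsilon> = norm (y - x)"
  define e where "e = (1 / \<epsilon>) *\<^sub>R (y - x)"
  have "0 < \<epsilon>" "\<epsilon> \<le> 1" using \<open>x \<noteq> y\<close> assms(3) by (simp_all add: \<epsilon>_def)
  then have e: "norm e = 1" "\<epsilon> *\<^sub>R e = y - x" by (simp_all add: e_def \<epsilon>_def)
  have "0 \<le> \<delta>" using osc[of 0 e e e] e by simp
  define V1 where "V1 = \<alpha> *\<^sub>R (y - x) + P + Q"
  define V2 where "V2 = \<epsilon> *\<^sub>R (Q + (\<alpha>/2) *\<^sub>R (y - x))"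
  define lam where "lam = - (\<alpha> * \<epsilon>^3 / 12)"
  define R1 where "R1 = f y - f x - D1 f x (y - x) - (1/2) *\<^sub>R D2 f x (y - x) (y - x)
    - (1/6) *\<^sub>R D3 f x (y - x) (y - x) (y - x)"
  define R2 where "R2 = D1 f y Q - D1 f x Q - D2 f x (y - x) Q - (1/2) *\<^sub>R D3 f x (y - x) (y - x) Q"
  have R1: "norm R1 \<le> \<epsilon> * \<epsilon> * \<epsilon> * \<delta>"
    using f_taylor3_along_line[OF sm osc] by (simp add: R1_def \<epsilon>_def)
  have R2: "norm R2 \<le> \<epsilon> * \<epsilon> * norm Q * \<delta>"
    using D1_taylor2_along_line[OF sm osc] by (simp add: R2_def \<epsilon>_def)
  have "\<alpha> *\<^sub>R (f y - f x) + D1 f x P + D1 f y Q = D1 f x V1 + D2 f x e V2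
      - (\<alpha> * \<epsilon>^3 / 12) *\<^sub>R D3 f x e e e + (\<epsilon>/2) *\<^sub>R D3 f x e e V2 + \<alpha> *\<^sub>R R1 + R2"
    using skew_combination_expansion[OF sm \<open>0 < \<epsilon>\<close>[THEN less_imp_neq, symmetric],
        where e = e and \<alpha> = \<alpha> and x = x and P = P and Q = Q]
    unfolding e(2) V1_def V2_def R1_def R2_def by simp
  then have "D1 f x V1 + D2 f x V2 e + lam *\<^sub>R D3 f x e e e = - ((\<epsilon>/2) *\<^sub>R D3 f x e e V2 + \<alpha> *\<^sub>R R1 + R2)"
    unfolding eq lam_def D2_commute[OF sm, of x V2 e] by (simp add: algebra_simps eq_neg_iff_add_eq_0)
  then have "c * (norm V1 + norm V2 + \<bar>lam\<bar>) \<le> norm ((\<epsilon>/2) *\<^sub>R D3 f x e e V2 + \<alpha> *\<^sub>R R1 + R2)"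
    using lower[OF e(1), of V1 V2 lam] by (simp only: norm_minus_cancel)
  also have "\<dots> \<le> (\<epsilon>/2) * (norm V2 * K) + \<bar>\<alpha>\<bar> * (\<epsilon> * \<epsilon> * \<epsilon> * \<delta>) + \<epsilon> * \<epsilon> * norm Q * \<delta>"
    using bound[of e e V2] e(1) R1 R2 \<open>0 < \<epsilon>\<close>
    by (intro norm_triangle_le add_mono) (auto intro: mult_left_mono)
  also have "\<dots> \<le> (\<epsilon> * K / 2 + \<delta>) * norm V2 + 18 * \<delta> * \<bar>lam\<bar>"
    using skew_remainder_weights_le[OF e(1) \<open>0 < \<epsilon>\<close> \<open>\<epsilon> \<le> 1\<close> \<open>0 \<le> \<delta>\<close>, of \<alpha> Q]
    unfolding e(2) V2_def[symmetric] lam_def[symmetric] by (simp add: algebra_simps)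
  finally have "norm V1 = 0 \<and> norm V2 = 0 \<and> \<bar>lam\<bar> = 0"
    by (rule weighted_sum_le_imp_zero) (use small \<open>0 \<le> \<delta>\<close> in \<open>auto simp: \<epsilon>_def\<close>)
  then show "\<alpha> = 0 \<and> P = 0 \<and> Q = 0"
    using \<open>0 < \<epsilon>\<close> by (auto simp: V1_def V2_def lam_def)
qed

lemma skew_independent_in_cball:
  fixes f :: "real^'n::finite \<Rightarrow> real^'m::finite"
  assumes sm: "smooth f"
    and lower: "\<And>e V1 V2 lam. norm e = 1 \<Longrightarrow>
      c * (norm V1 + norm V2 + \<bar>lam\<bar>) \<le> norm (D1 f a V1 + D2 f a V2 e + lam *\<^sub>R D3 f a e e e)"
    and K: "\<And>u v w. norm (D3 f a u v w) \<le> norm u * norm v * norm w * K"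
    and D1_near: "\<And>z v. z \<in> cball a r \<Longrightarrow> norm (D1 f z v - D1 f a v) \<le> norm v * \<eta>"
    and D2_near: "\<And>z u v. z \<in> cball a r \<Longrightarrow> norm (D2 f z u v - D2 f a u v) \<le> norm u * norm v * \<eta>"
    and D3_near: "\<And>z u v w. z \<in> cball a r \<Longrightarrow>
      norm (D3 f z u v w - D3 f a u v w) \<le> norm u * norm v * norm w * \<eta>"
    and "0 \<le> K" "0 \<le> \<eta>" "2 * r \<le> 1" "r * (K + \<eta>) + 3 * \<eta> < c" "37 * \<eta> < c"
    and x: "x \<in> cball a r" and y: "y \<in> cball a r" and "x \<noteq> y"
  shows "skew_independent f x y"
proof (rule skew_independent_if_lower_bound[OF sm \<open>x \<noteq> y\<close>,
      where c = "c - \<eta>" and \<delta> = "2 * \<eta>" and K = "K + \<eta>"])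
  have seg: "x + t *\<^sub>R (y - x) \<in> cball a r" if "t \<in> {0..1}" for t
    using convexD_alt[OF convex_cball x y, of t] that by (simp add: algebra_simps)
  have "norm (y - x) \<le> 2 * r"
    using x y norm_triangle_ineq4[of "y - a" "x - a"] by (simp add: dist_norm norm_minus_commute)
  then show "norm (y - x) \<le> 1" using \<open>2 * r \<le> 1\<close> by simp
  show "(c - \<eta>) * (norm V1 + norm V2 + \<bar>lam\<bar>) \<le> norm (D1 f x V1 + D2 f x V2 e + lam *\<^sub>R D3 f x e e e)"
    if "norm e = 1" for e V1 V2 lam
    using that by (intro lower_bound_perturb[OF lower] D1_near D2_near D3_near x)
  show "norm (D3 f (x + t *\<^sub>R (y - x)) u v w - D3 f x u v w) \<le> norm u * norm v * norm w * (2 * \<eta>)"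
    if "t \<in> {0..1}" for t u v w
    using D3_near[OF seg[OF that], of u v w] D3_near[OF x, of u v w]
      norm_triangle_ineq4[of "D3 f (x + t *\<^sub>R (y - x)) u v w - D3 f a u v w" "D3 f x u v w - D3 f a u v w"]
    by simp
  show "norm (D3 f x u v w) \<le> norm u * norm v * norm w * (K + \<eta>)" for u v w
    using D3_near[OF x, of u v w] K[of u v w] norm_triangle_ineq[of "D3 f a u v w" "D3 f x u v w - D3 f a u v w"]
    by (simp add: algebra_simps)
  have "norm (y - x) * (K + \<eta>) \<le> 2 * r * (K + \<eta>)"
    using \<open>norm (y - x) \<le> 2 * r\<close> \<open>0 \<le> K\<close> \<open>0 \<le> \<eta>\<close> by (intro mult_right_mono) auto
  then show "norm (y - x) * (K + \<eta>) / 2 + 2 * \<eta> < c - \<eta>"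
    using \<open>r * (K + \<eta>) + 3 * \<eta> < c\<close> by simp
  show "18 * (2 * \<eta>) < c - \<eta>" using \<open>37 * \<eta> < c\<close> by simp
qed

lemma skew_independent_near:
  fixes f :: "real^'n::finite \<Rightarrow> real^'m::finite"
  assumes sm: "smooth f" and "local_condition f a"
  obtains r where "0 < r"
    and "\<And>x y. x \<in> cball a r \<Longrightarrow> y \<in> cball a r \<Longrightarrow> x \<noteq> y \<Longrightarrow> skew_independent f x y"
proof -
  obtain c where "c > 0" and lower: "\<And>e V1 V2 lam. norm e = 1 \<Longrightarrow>
      c * (norm V1 + norm V2 + \<bar>lam\<bar>) \<le> norm (D1 f a V1 + D2 f a V2 e + lam *\<^sub>R D3 f a e e e)"
    using local_condition_lower_bound[OF assms] by blast
  define \<eta> where "\<eta> = c / 100"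
  have "\<eta> > 0" using \<open>c > 0\<close> by (simp add: \<eta>_def)
  obtain K where "K \<ge> 0" and K: "\<And>u v w. norm (D3 f a u v w) \<le> norm u * norm v * norm w * K"
    using D3_bounded by blast
  obtain d where "0 < d"
    and D1_near: "\<And>z v. dist z a \<le> d \<Longrightarrow> norm (D1 f z v - D1 f a v) \<le> norm v * \<eta>"
    and D2_near: "\<And>z u v. dist z a \<le> d \<Longrightarrow> norm (D2 f z u v - D2 f a u v) \<le> norm u * norm v * \<eta>"
    and D3_near: "\<And>z u v w. dist z a \<le> d \<Longrightarrow>
      norm (D3 f z u v w - D3 f a u v w) \<le> norm u * norm v * norm w * \<eta>"
    using derivatives_close_near[OF sm \<open>\<eta> > 0\<close>] by blast
  define r where "r = min d (min (1/2) (c / (4 * (K + \<eta>))))"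
  have "0 < r" using \<open>d > 0\<close> \<open>c > 0\<close> \<open>\<eta> > 0\<close> \<open>K \<ge> 0\<close> by (simp add: r_def)
  have "r \<le> c / (4 * (K + \<eta>))" by (simp add: r_def)
  then have "r * (K + \<eta>) \<le> c / 4"
    using \<open>\<eta> > 0\<close> \<open>K \<ge> 0\<close> by (simp add: pos_le_divide_eq mult.commute mult.left_commute)
  have near: "dist z a \<le> d" if "z \<in> cball a r" for z
    using that by (simp add: r_def dist_commute)
  show thesis
  proof (rule that[OF \<open>0 < r\<close>])
    show "skew_independent f x y" if "x \<in> cball a r" "y \<in> cball a r" "x \<noteq> y" for x y
      using \<open>c > 0\<close> \<open>K \<ge> 0\<close> \<open>\<eta> > 0\<close> \<open>r * (K + \<eta>) \<le> c / 4\<close> that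
      by (intro skew_independent_in_cball[OF sm lower K, where r = r and \<eta> = \<eta>]
          D1_near D2_near D3_near near) (auto simp: r_def \<eta>_def)
  qed
qed

section \<open>Totally skew embeddings\<close>

lemma skew_independent_imp_neq:
  "smooth f \<Longrightarrow> skew_independent f x y \<Longrightarrow> f x \<noteq> f y"
  unfolding skew_independent_def
  by (metis D1_linear_simps(5) add.right_neutral diff_self scaleR_zero_right zero_neq_one)

lemma skew_independent_imp_inj_derivative:
  assumes "smooth f" and "skew_independent f x y"
  shows "inj (frechet_derivative f (at x))"
proof (rule injI)
  fix u v assume "frechet_derivative f (at x) u = frechet_derivative f (at x) v"
  then have "0 *\<^sub>R (f y - f x) + D1 f x (u - v) + D1 f y 0 = 0"
    by (simp add: D1_def[symmetric] D1_linear_simps[OF assms(1)])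
  then show "u = v" using assms(2) unfolding skew_independent_def by fastforce
qed

lemma skew_independent_imp_totally_skew_at:
  assumes sm: "smooth f" and indep: "skew_independent f x y"
  shows "totally_skew_at f x y"
  unfolding totally_skew_at_def
proof (intro allI impI conjI)
  fix u w
  assume uw: "u \<in> range (frechet_derivative f (at x)) \<and> u \<noteq> 0 \<and>
    w \<in> range (frechet_derivative f (at y)) \<and> w \<noteq> 0"
  then obtain p q where u: "u = D1 f x p" and w: "w = D1 f y q" unfolding D1_def by blast
  have "q \<noteq> 0" using uw w by (auto simp: D1_linear_simps[OF sm])
  show "\<not> (\<exists>k. w = k *\<^sub>R u)"
  proof
    assume "\<exists>k. w = k *\<^sub>R u"
    then obtain k where "w = k *\<^sub>R u" by blast
    then have "0 *\<^sub>R (f y - f x) + D1 f x ((-k) *\<^sub>R p) + D1 f y q = 0"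
      by (simp add: u w D1_linear_simps[OF sm])
    then show False using indep \<open>q \<noteq> 0\<close> unfolding skew_independent_def by blast
  qed
  show "aline (f x) u \<inter> aline (f y) w = {}"
  proof (rule ccontr)
    assume "aline (f x) u \<inter> aline (f y) w \<noteq> {}"
    then obtain s t where "f x + s *\<^sub>R u = f y + t *\<^sub>R w" unfolding aline_def by blast
    then have "1 *\<^sub>R (f y - f x) + D1 f x ((-s) *\<^sub>R p) + D1 f y (t *\<^sub>R q) = 0"
      by (simp add: u w D1_linear_simps[OF sm] algebra_simps)
    then show False using indep unfolding skew_independent_def by fastforce
  qed
qed

lemma totally_skew_embedding_ball:
  fixes f :: "real^'n::finite \<Rightarrow> real^'m::finite"
  assumes sm: "smooth f" and "0 < r"
    and indep: "\<And>x y. x \<in> cball a r \<Longrightarrow> y \<in> cball a r \<Longrightarrow> x \<noteq> y \<Longrightarrow> skew_independent f x y"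
  shows "totally_skew_embedding f (ball a r)"
proof -
  have inj: "inj_on f (cball a r)"
    using indep skew_independent_imp_neq[OF sm] by (meson inj_onI)
  obtain g where g: "homeomorphism (cball a r) (f ` cball a r) f g"
    using homeomorphism_compact[OF compact_cball smooth_continuous_on[OF sm] refl inj] by blast
  have "homeomorphism (ball a r) (f ` ball a r) f (inv_into (ball a r) f)"
  proof (rule homeomorphism_cong[OF homeomorphism_of_subsets[OF g ball_subset_cball order_refl refl]])
    show "inv_into (ball a r) f y = g y" if "y \<in> f ` ball a r" for y
      using that inj g ball_subset_cball
      by (metis (no_types, lifting) homeomorphism_apply1 imageE inj_on_subset inv_into_f_f subsetD)
  qed auto
  moreover have "inj (frechet_derivative f (at x))" if "x \<in> ball a r" for x
  proof -
    have "0 < r - dist a x" using that by simp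
    then obtain y where "y \<noteq> x" and "dist y x < r - dist a x" using perfect_choose_dist by blast
    then have "y \<in> cball a r" using dist_triangle[of a y x] by (simp add: dist_commute)
    then show ?thesis
      using indep[of x y] that \<open>y \<noteq> x\<close> by (intro skew_independent_imp_inj_derivative[OF sm]) auto
  qed
  moreover have "totally_skew_at f x y" if "x \<in> ball a r" "y \<in> ball a r" "f x \<noteq> f y" for x y
    using that indep[of x y] by (intro skew_independent_imp_totally_skew_at[OF sm]) auto
  ultimately show ?thesis
    unfolding totally_skew_embedding_def embedding_on_def
    using inj sm by (auto intro: smooth_differentiable inj_on_subset[OF inj ball_subset_cball])
qed

theorem theorem2p1:
  fixes f :: "real^'n::finite \<Rightarrow> real^'m::finite" and a :: "real^'n"
  assumes "smooth f" and "local_condition f a"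
  shows "\<exists>U. open U \<and> a \<in> U \<and> totally_skew_embedding f U"
proof -
  obtain r where "0 < r"
    and "\<And>x y. x \<in> cball a r \<Longrightarrow> y \<in> cball a r \<Longrightarrow> x \<noteq> y \<Longrightarrow> skew_independent f x y"
    using skew_independent_near[OF assms] by blast
  then have "totally_skew_embedding f (ball a r)"
    using totally_skew_embedding_ball[OF assms(1)] by blast
  then show ?thesis using \<open>0 < r\<close> by (intro exI[of _ "ball a r"]) auto
qed

end
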